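(* Let $\mathcal{M}\in\mathbb{R}^{N\times N}$ be a column-stochastic matrix ($\mathcal{M}_{i,j}\ge 0$, $\sum_{i=1}^N\mathcal{M}_{i,j}=1$ for every $j$) of an ergodic Markov chain, with eigenvectors $\mathbf{u_1},\ldots,\mathbf{u_N}$ forming a basis of $\mathbb{R}^N$ and eigenvalues $\lambda_1=1$, $|\lambda_j|<1$ for $j>1$, where $\mathbf{u_1}$ is the unique invariant probability vector ($\mathcal{M}\mathbf{u_1}=\mathbf{u_1}$, entries summing to $1$). Let $W=\operatorname{span}\{\mathbf{u_2},\ldots,\mathbf{u_N}\}$; then $1-\mathcal{M}$ maps $W$ bijectively onto $W$, and we write $(1-\mathcal{M})^{-1}$ for the inverse of its restriction to $W$ (equivalently $(1-\mathcal{M})^{-1}\mathbf{y}=\sum_{k=0}^\infty\mathcal{M}^k\mathbf{y}$ for $\mathbf{y}\in W$). Let $m\in\mathbb{R}^{N\times N}$, $m\neq 0$, satisfy $\sum_{i=1}^N m_{i,j}=0$ for all $j$ (so $m\mathbb{R}^N\subseteq W$). Define $\epsilon_+=\max\{\epsilon:\ \mathcal{M}_{i,j}+\epsilon m_{i,j}\geq 0\ \forall i,j\}$, $\epsilon_-=\min\{\epsilon:\ \mathcal{M}_{i,j}+\epsilon m_{i,j}\geq 0\ \forall i,j\}$, and $$\epsilon^*_{max}=\frac{1}{\|m\|_1\,\|(1-\mathcal{M})^{-1}\|^*_1},\qquad \|\mathcal{Q}\|^*_1=\sup_{\mathbf{v}\in W,\ \|\mathbf{v}\|_1=1}\|\mathcal{Q}\mathbf{v}\|_1,$$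 where $\|m\|_1$ is the operator norm induced by the $\ell^1$ norm. Then for every $\epsilon$ with $|\epsilon|<\epsilon^*_{max}$ and $\epsilon\in[\epsilon_-,\epsilon_+]$, the series $$\mathbf{v_1}=\mathbf{u_1}+\sum_{n=1}^\infty\epsilon^n\left((1-\mathcal{M})^{-1}m\right)^n\mathbf{u_1}$$ converges in $\ell^1$, and (assuming, as throughout, that the stochastic matrix $\mathcal{M}+\epsilon m$ has a unique invariant probability vector) $\mathbf{v_1}$ is the invariant measure of $\mathcal{M}+\epsilon m$, i.e. $(\mathcal{M}+\epsilon m)\mathbf{v_1}=\mathbf{v_1}$ with entries summing to $1$. Equivalently $\mathbf{v_1}=(1-\epsilon(1-\mathcal{M})^{-1}m)^{-1}\mathbf{u_1}$.
   Context: Column-vector convention: $\mathcal{M}_{i,j}$ is the probability of a transition from state $j$ to state $i$ in one step; probability vectors are column vectors in $\mathbb{R}^N$. For $\epsilon\in[\epsilon_-,\epsilon_+]$ the matrix $\mathcal{M}+\epsilon m$ is again column-stochastic. *)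

theory Defs
  imports "HOL-Analysis.Analysis"
begin

text \<open>Column-vector convention: M $ i $ j is the probability of a transition j to i.\<close>

definition l1norm :: "real ^ 'n \<Rightarrow> real" where
  "l1norm v = (\<Sum>i\<in>UNIV. \<bar>v $ i\<bar>)"

definition column_stochastic :: "real ^ 'n ^ 'n \<Rightarrow> bool" where
  "column_stochastic A \<longleftrightarrow> (\<forall>i j. A $ i $ j \<ge> 0) \<and> (\<forall>j. (\<Sum>i\<in>UNIV. A $ i $ j) = 1)"

definition prob_vector :: "real ^ 'n \<Rightarrow> bool" where
  "prob_vector p \<longleftrightarrow> (\<forall>i. p $ i \<ge> 0) \<and> (\<Sum>i\<in>UNIV. p $ i) = 1"

definition matpow :: "real ^ 'n ^ 'n \<Rightarrow> nat \<Rightarrow> real ^ 'n ^ 'n" where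
  "matpow A k = (((**) A) ^^ k) (mat 1)"

text \<open>Ergodic (irreducible and aperiodic) finite chain = primitive transition matrix.\<close>
definition ergodic :: "real ^ 'n ^ 'n \<Rightarrow> bool" where
  "ergodic A \<longleftrightarrow> (\<exists>k>0. \<forall>i j. matpow A k $ i $ j > 0)"

definition opnorm1 :: "real ^ 'n ^ 'n \<Rightarrow> real" where
  "opnorm1 A = Sup {l1norm (A *v v) | v. l1norm v = 1}"

definition resolvent_on :: "real ^ 'n ^ 'n \<Rightarrow> (real ^ 'n) set \<Rightarrow> real ^ 'n \<Rightarrow> real ^ 'n" where
  "resolvent_on M W y = (THE x. x \<in> W \<and> x - M *v x = y)"

definition opnorm1_on :: "(real ^ 'n \<Rightarrow> real ^ 'n) \<Rightarrow> (real ^ 'n) set \<Rightarrow> real" where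
  "opnorm1_on Q W = Sup {l1norm (Q v) | v. v \<in> W \<and> l1norm v = 1}"

definition nonneg_set :: "real ^ 'n ^ 'n \<Rightarrow> real ^ 'n ^ 'n \<Rightarrow> real set" where
  "nonneg_set M m = {e. \<forall>i j. M $ i $ j + e * m $ i $ j \<ge> 0}"

definition eps_plus :: "real ^ 'n ^ 'n \<Rightarrow> real ^ 'n ^ 'n \<Rightarrow> real" where
  "eps_plus M m = Sup (nonneg_set M m)"

definition eps_minus :: "real ^ 'n ^ 'n \<Rightarrow> real ^ 'n ^ 'n \<Rightarrow> real" where
  "eps_minus M m = Inf (nonneg_set M m)"

end

theory Submission
  imports Defs
begin

text \<open>
  The total mass \<open>v \<mapsto> \<Sum>\<^sub>i v\<^sub>i\<close> is preserved by \<open>\<M>\<close> and annihilated by \<open>m\<close>, and \<open>W\<close> is exactly its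
  kernel; on \<open>W\<close> the map \<open>1 - \<M>\<close> has a linear inverse \<open>R\<close>, obtained from the eigenbasis by dividing
  \<open>u\<^sub>k\<close> by \<open>1 - \<lambda>\<^sub>k\<close>. With \<open>T = R m\<close> the hypothesis on \<open>\<epsilon>\<close> says that \<open>\<epsilon> T\<close> is an \<open>\<ell>\<^sup>1\<close>-contraction,
  so the Neumann series \<open>v\<^sub>1 = \<Sum>\<^sub>n (\<epsilon> T)\<^sup>n u\<^sub>1\<close> converges and solves \<open>v\<^sub>1 = u\<^sub>1 + \<epsilon> T v\<^sub>1\<close>.
  Applying \<open>1 - \<M>\<close> gives \<open>(\<M> + \<epsilon> m) v\<^sub>1 = v\<^sub>1\<close>, and \<open>v\<^sub>1\<close> has mass 1. The invariant probability
  vector \<open>p\<close> differs from \<open>v\<^sub>1\<close> by some \<open>d \<in> W\<close> with \<open>d = \<epsilon> T d\<close>, so \<open>d = 0\<close> by contraction; this is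
  what makes \<open>v\<^sub>1\<close> nonnegative.
\<close>

lemma l1norm_nonneg: "0 \<le> l1norm v"
  unfolding l1norm_def by (simp add: sum_nonneg)

lemma norm_le_l1norm: "norm v \<le> l1norm v"
  unfolding l1norm_def by (rule norm_le_l1_cart)

lemma l1norm_le_card_norm: "l1norm (v :: real ^ 'n) \<le> real CARD('n) * norm v"
proof -
  have "l1norm v \<le> (\<Sum>i\<in>(UNIV :: 'n set). norm v)"
    unfolding l1norm_def by (rule sum_mono) (rule component_le_norm_cart)
  then show ?thesis by simp
qed

lemma l1norm_scaleR: "l1norm (c *\<^sub>R v) = \<bar>c\<bar> * l1norm v"
  unfolding l1norm_def by (simp add: abs_mult sum_distrib_left)

lemma l1norm_eq_0_iff: "l1norm v = 0 \<longleftrightarrow> v = 0"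
  using norm_le_l1norm[of v] l1norm_nonneg[of v] by (auto simp: l1norm_def)

lemma tendsto_l1norm_diff_zero:
  fixes f :: "'a \<Rightarrow> real ^ 'n"
  assumes "(f \<longlongrightarrow> l) F"
  shows "((\<lambda>x. l1norm (f x - l)) \<longlongrightarrow> 0) F"
proof (rule tendsto_sandwich[where f = "\<lambda>_. 0" and h = "\<lambda>x. real CARD('n) * norm (f x - l)"])
  show "((\<lambda>x. real CARD('n) * norm (f x - l)) \<longlongrightarrow> 0) F"
    by (intro tendsto_mult_right_zero tendsto_norm_zero LIM_zero assms)
qed (auto intro: always_eventually l1norm_nonneg l1norm_le_card_norm)

lemma l1norm_le_Sup_unit_l1norms:
  fixes f :: "real ^ 'n \<Rightarrow> real ^ 'n"
  assumes lin: "linear f" and scale_closed: "\<And>c v. P v \<Longrightarrow> P (c *\<^sub>R v)" and "P w"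
  shows "l1norm (f w) \<le> Sup {l1norm (f v) | v. P v \<and> l1norm v = 1} * l1norm w"
proof (cases "w = 0")
  case True
  then show ?thesis using linear_0[OF lin] by (simp add: l1norm_def)
next
  case False
  define t where "t = l1norm w"
  have "t > 0"
    using False l1norm_eq_0_iff l1norm_nonneg unfolding t_def by (metis less_eq_real_def)
  obtain K where K: "K > 0" "\<And>x. norm (f x) \<le> K * norm x"
    using linear_bounded_pos[OF lin] by blast
  have "l1norm (f v) \<le> real CARD('n) * K" if "l1norm v = 1" for v
  proof -
    have "l1norm (f v) \<le> real CARD('n) * (K * norm v)"
      using l1norm_le_card_norm[of "f v"] K(2)[of v]
      by (meson mult_left_mono of_nat_0_le_iff order_trans)
    also have "\<dots> \<le> real CARD('n) * K"
      using norm_le_l1norm[of v] that K(1) by (intro mult_left_mono) auto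
    finally show ?thesis .
  qed
  then have bdd: "bdd_above {l1norm (f v) | v. P v \<and> l1norm v = 1}"
    unfolding bdd_above_def by blast
  have "P ((1 / t) *\<^sub>R w)" "l1norm ((1 / t) *\<^sub>R w) = 1"
    using scale_closed[OF \<open>P w\<close>] \<open>t > 0\<close> by (auto simp: l1norm_scaleR t_def)
  then have "l1norm (f ((1 / t) *\<^sub>R w)) \<le> Sup {l1norm (f v) | v. P v \<and> l1norm v = 1}"
    by (intro cSup_upper[OF _ bdd]) blast
  then show ?thesis
    using \<open>t > 0\<close> by (simp add: linear_scale[OF lin] l1norm_scaleR divide_le_eq t_def)
qed

lemma l1norm_matrix_vector_le: "l1norm (A *v x) \<le> opnorm1 A * l1norm x"
  using l1norm_le_Sup_unit_l1norms[OF matrix_vector_mul_linear, of "\<lambda>_. True"]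
  unfolding opnorm1_def by simp

lemma opnorm1_nonneg: "0 \<le> opnorm1 (A :: real ^ 'n ^ 'n)"
proof -
  obtain j :: 'n where True by blast
  have "l1norm (axis j (1::real)) = 1"
    unfolding l1norm_def axis_def by (simp add: if_distrib cong: if_cong)
  then have "0 \<le> opnorm1 A * 1"
    using l1norm_matrix_vector_le[of A "axis j 1"] l1norm_nonneg order_trans by metis
  then show ?thesis by simp
qed

lemma l1norm_le_opnorm1_on:
  assumes "linear L" and "subspace W" and agree: "\<And>v. v \<in> W \<Longrightarrow> f v = L v" and "w \<in> W"
  shows "l1norm (f w) \<le> opnorm1_on f W * l1norm w"
proof -
  have "{l1norm (f v) | v. v \<in> W \<and> l1norm v = 1} = {l1norm (L v) | v. v \<in> W \<and> l1norm v = 1}"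
    using agree by metis
  then show ?thesis
    using l1norm_le_Sup_unit_l1norms[OF \<open>linear L\<close>, of "\<lambda>v. v \<in> W" w] assms
    by (simp add: opnorm1_on_def subspace_scale)
qed

definition mass :: "real ^ 'n \<Rightarrow> real" where
  "mass v = (\<Sum>i\<in>UNIV. v $ i)"

lemma linear_mass: "linear mass"
  unfolding mass_def by (intro linearI) (auto simp: sum.distrib sum_distrib_left)

lemma mass_matrix_vector_mult: "mass (A *v v) = (\<Sum>j\<in>UNIV. (\<Sum>i\<in>UNIV. A $ i $ j) * v $ j)"
proof -
  have "mass (A *v v) = (\<Sum>i\<in>UNIV. \<Sum>j\<in>UNIV. A $ i $ j * v $ j)"
    by (simp add: mass_def matrix_vector_mult_def)
  also have "\<dots> = (\<Sum>j\<in>UNIV. (\<Sum>i\<in>UNIV. A $ i $ j) * v $ j)"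
    by (subst sum.swap) (simp add: sum_distrib_right)
  finally show ?thesis .
qed

lemma mass_stochastic_mult: "column_stochastic A \<Longrightarrow> mass (A *v v) = mass v"
  unfolding mass_matrix_vector_mult column_stochastic_def by (simp add: mass_def)

lemma span_eq_kernel_of_dual_basis:
  fixes s :: "'a::real_vector \<Rightarrow> real"
  assumes "linear s" and spans: "span (range u) = UNIV"
    and s_other: "\<And>k. k \<noteq> j \<Longrightarrow> s (u k) = 0" and "s (u j) \<noteq> 0"
  shows "span (u ` (UNIV - {j})) = {v. s v = 0}"
proof (intro equalityI subsetI CollectI)
  fix v assume "v \<in> span (u ` (UNIV - {j}))"
  then show "s v = 0"
    using linear_eq_on[OF \<open>linear s\<close> linear_zero] s_other by auto
next
  fix v assume "v \<in> {v. s v = 0}"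
  have "range u = insert (u j) (u ` (UNIV - {j}))" by blast
  then obtain c where c: "v - c *\<^sub>R u j \<in> span (u ` (UNIV - {j}))"
    using spans span_breakdown_eq by (metis UNIV_I)
  moreover have "s (v - c *\<^sub>R u j) = 0"
    using c linear_eq_on[OF \<open>linear s\<close> linear_zero] s_other by auto
  ultimately show "v \<in> span (u ` (UNIV - {j}))"
    using \<open>v \<in> {v. s v = 0}\<close> \<open>s (u j) \<noteq> 0\<close>
    by (auto simp: linear_diff[OF \<open>linear s\<close>] linear_scale[OF \<open>linear s\<close>])
qed

lemma eigenspan_eq_mass_kernel:
  fixes M :: "real ^ 'n ^ 'n" and u :: "'k \<Rightarrow> real ^ 'n"
  assumes "column_stochastic M" and spans: "span (range u) = UNIV"
    and eig: "\<And>k. M *v u k = lam k *\<^sub>R u k" and lam_ne_1: "\<And>k. k \<noteq> j \<Longrightarrow> lam k \<noteq> 1"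
    and "mass (u j) \<noteq> 0"
  shows "span (u ` (UNIV - {j})) = {v. mass v = 0}"
proof (rule span_eq_kernel_of_dual_basis[OF linear_mass spans _ \<open>mass (u j) \<noteq> 0\<close>])
  fix k assume "k \<noteq> j"
  have "mass (u k) = lam k * mass (u k)"
    using mass_stochastic_mult[OF \<open>column_stochastic M\<close>, of "u k"]
    by (simp add: eig linear_scale[OF linear_mass])
  then show "mass (u k) = 0"
    using lam_ne_1[OF \<open>k \<noteq> j\<close>] by (auto simp: algebra_simps)
qed

lemma resolvent_on_eqI:
  assumes into: "\<And>w. w \<in> W \<Longrightarrow> L w \<in> W"
    and right_inv: "\<And>w. w \<in> W \<Longrightarrow> L w - M *v L w = w"
    and left_inv: "\<And>w. w \<in> W \<Longrightarrow> L (w - M *v w) = w"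
    and "w \<in> W"
  shows "resolvent_on M W w = L w"
  unfolding resolvent_on_def
  using assms by (intro the_equality) force+

lemma eigenbasis_inverse_one_minus:
  fixes M :: "real ^ 'n ^ 'n" and u :: "'k \<Rightarrow> real ^ 'n"
  assumes indep: "independent (range u)" and inj: "inj u"
    and eig: "\<And>k. M *v u k = lam k *\<^sub>R u k"
    and lam_ne_1: "\<And>k. k \<noteq> j \<Longrightarrow> lam k \<noteq> 1"
  obtains L where "linear L"
    and "\<And>w. w \<in> span (u ` (UNIV - {j})) \<Longrightarrow> L w \<in> span (u ` (UNIV - {j}))"
    and "\<And>w. w \<in> span (u ` (UNIV - {j})) \<Longrightarrow> L w - M *v L w = w"
    and "\<And>w. w \<in> span (u ` (UNIV - {j})) \<Longrightarrow> L (w - M *v w) = w"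
proof -
  let ?B = "u ` (UNIV - {j})"
  obtain L where "linear L"
    and L_basis: "\<forall>x\<in>range u. L x = (1 / (1 - lam (inv u x))) *\<^sub>R x"
    using linear_independent_extend[OF indep, where f = "\<lambda>x. (1 / (1 - lam (inv u x))) *\<^sub>R x"] by blast
  have L_eig: "L (u k) = (1 / (1 - lam k)) *\<^sub>R u k" for k
    using L_basis inj by (simp add: inv_f_f)
  have linM: "linear ((*v) M)" by (rule matrix_vector_mul_linear)
  have one_minus_M_eig: "c *\<^sub>R u k - M *v (c *\<^sub>R u k) = (1 - lam k) *\<^sub>R (c *\<^sub>R u k)" for c k
    by (simp add: linear_scale[OF linM] eig algebra_simps)
  show ?thesis
  proof
    show "L w \<in> span ?B" if "w \<in> span ?B" for w
    proof -
      have "L (u k) \<in> span ?B" if "k \<noteq> j" for k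
        using that by (simp add: L_eig span_scale span_base)
      then have "L ` ?B \<subseteq> span ?B" by blast
      then have "span (L ` ?B) \<subseteq> span ?B"
        by (simp add: span_minimal)
      then show ?thesis
        using that span_linear_image[OF \<open>linear L\<close>, of ?B] by blast
    qed
    show "L w - M *v L w = w" if "w \<in> span ?B" for w
    proof -
      have "linear (\<lambda>w. L w - M *v L w)"
        using linear_compose[OF \<open>linear L\<close> linM] \<open>linear L\<close>
        by (simp add: linear_compose_sub o_def)
      then have "(\<lambda>w. L w - M *v L w) w = id w"
      proof (rule linear_eq_on[OF _ linear_id that])
        fix b assume "b \<in> ?B"
        then obtain k where "k \<noteq> j" "b = u k" by auto
        then show "L b - M *v L b = id b"
          using one_minus_M_eig[of "1 / (1 - lam k)" k] lam_ne_1 by (simp add: L_eig)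
      qed
      then show ?thesis by simp
    qed
    show "L (w - M *v w) = w" if "w \<in> span ?B" for w
    proof -
      have "linear (\<lambda>w. w - M *v w)"
        using linM by (simp add: linear_compose_sub linear_id[unfolded id_def])
      then have "linear (\<lambda>w. L (w - M *v w))"
        using linear_compose[OF _ \<open>linear L\<close>] by (simp add: o_def)
      then have "(\<lambda>w. L (w - M *v w)) w = id w"
      proof (rule linear_eq_on[OF _ linear_id that])
        fix b assume "b \<in> ?B"
        then obtain k where "k \<noteq> j" "b = u k" by auto
        then show "L (b - M *v b) = id b"
          using one_minus_M_eig[of 1 k] lam_ne_1
          by (simp add: L_eig linear_scale[OF \<open>linear L\<close>])
      qed
      then show ?thesis by simp
    qed
  qed fact
qed

lemma l1_neumann_series:
  fixes T :: "real ^ 'n \<Rightarrow> real ^ 'n"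
  assumes "linear T" and "0 \<le> c" and bound: "\<And>x. l1norm (T x) \<le> c * l1norm x"
    and contraction: "\<bar>\<epsilon>\<bar> * c < 1"
  shows "\<exists>v. (\<lambda>K. l1norm (u + (\<Sum>n\<in>{1..K}. \<epsilon> ^ n *\<^sub>R (T ^^ n) u) - v)) \<longlonglongrightarrow> 0
           \<and> v = u + \<epsilon> *\<^sub>R T v"
proof -
  define b where "b n = \<epsilon> ^ n *\<^sub>R (T ^^ n) u" for n
  have iterate_bound: "l1norm ((T ^^ n) u) \<le> c ^ n * l1norm u" for n
  proof (induction n)
    case (Suc n)
    then have "c * l1norm ((T ^^ n) u) \<le> c * (c ^ n * l1norm u)"
      using \<open>0 \<le> c\<close> by (rule mult_left_mono)
    then show ?case using bound[of "(T ^^ n) u"] by simp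
  qed simp
  have b_bound: "norm (b n) \<le> l1norm u * (\<bar>\<epsilon>\<bar> * c) ^ n" for n
  proof -
    have "norm (b n) \<le> \<bar>\<epsilon>\<bar> ^ n * l1norm ((T ^^ n) u)"
      using norm_le_l1norm[of "b n"] by (simp add: b_def l1norm_scaleR power_abs)
    also have "\<dots> \<le> \<bar>\<epsilon>\<bar> ^ n * (c ^ n * l1norm u)"
      using iterate_bound by (intro mult_left_mono) auto
    finally show ?thesis by (simp add: power_mult_distrib algebra_simps)
  qed
  have "summable (\<lambda>n. l1norm u * (\<bar>\<epsilon>\<bar> * c) ^ n)"
    using contraction \<open>0 \<le> c\<close> by (intro summable_mult summable_geometric) simp
  then have "b sums suminf b"
    using summable_comparison_test' b_bound summable_sums by blast
  define v where "v = suminf b"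
  have partial_sums: "u + (\<Sum>n\<in>{1..K}. \<epsilon> ^ n *\<^sub>R (T ^^ n) u) = (\<Sum>n<Suc K. b n)" for K
  proof -
    have "(\<Sum>n<Suc K. b n) = b 0 + (\<Sum>n\<in>{Suc 0..K}. b n)"
      unfolding lessThan_Suc_atMost atMost_atLeast0 by (rule sum.atLeast_Suc_atMost) simp
    then show ?thesis by (simp add: b_def)
  qed
  have "(\<lambda>K. \<Sum>n<Suc K. b n) \<longlonglongrightarrow> v"
    using \<open>b sums suminf b\<close> unfolding v_def sums_def by (rule LIMSEQ_Suc)
  then have converges: "(\<lambda>K. l1norm (u + (\<Sum>n\<in>{1..K}. \<epsilon> ^ n *\<^sub>R (T ^^ n) u) - v)) \<longlonglongrightarrow> 0"
    unfolding partial_sums by (rule tendsto_l1norm_diff_zero)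
  have bl: "bounded_linear (\<lambda>x. \<epsilon> *\<^sub>R T x)"
    using \<open>linear T\<close> by (simp add: linear_conv_bounded_linear bounded_linear_scaleR_right
        bounded_linear_compose[OF bounded_linear_scaleR_right])
  have "b 0 = u" and b_Suc: "b (Suc n) = \<epsilon> *\<^sub>R T (b n)" for n
    by (simp_all add: b_def linear_scale[OF \<open>linear T\<close>])
  then have "(\<lambda>n. b (Suc n)) sums (v - u)"
    using sums_Suc_iff[of b "v - u"] \<open>b sums suminf b\<close> by (simp add: v_def)
  moreover have "(\<lambda>n. b (Suc n)) sums (\<epsilon> *\<^sub>R T v)"
    unfolding b_Suc v_def by (rule bounded_linear.sums[OF bl \<open>b sums suminf b\<close>])
  ultimately have "v = u + \<epsilon> *\<^sub>R T v"
    using sums_unique2 by (metis diff_add_cancel add.commute)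
  with converges show ?thesis by blast
qed

lemma eq_zero_if_contracted:
  assumes bound: "\<And>x. l1norm (T x) \<le> c * l1norm x" and contraction: "\<bar>\<epsilon>\<bar> * c < 1"
    and fixed: "d = \<epsilon> *\<^sub>R T d"
  shows "d = 0"
proof -
  have "l1norm d \<le> \<bar>\<epsilon>\<bar> * (c * l1norm d)"
    using arg_cong[OF fixed, of l1norm] bound[of d] by (simp add: l1norm_scaleR mult_left_mono)
  then have "(1 - \<bar>\<epsilon>\<bar> * c) * l1norm d \<le> 0" by (simp add: algebra_simps)
  then have "l1norm d = 0"
    using contraction l1norm_nonneg[of d] by (simp add: mult_le_0_iff)
  then show ?thesis by (simp add: l1norm_eq_0_iff)
qed

lemma perturbed_fixed_point_iff:
  fixes M m :: "real ^ 'n ^ 'n"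
  shows "(M + \<epsilon> *\<^sub>R m) *v x = x \<longleftrightarrow> x - M *v x = \<epsilon> *\<^sub>R (m *v x)"
  by (auto simp: matrix_vector_mult_add_rdistrib scaleR_matrix_vector_assoc[symmetric] algebra_simps)

lemma resolvent_mult_contraction:
  assumes "linear L" and "subspace W" and R_eq_L: "\<And>w. w \<in> W \<Longrightarrow> R w = L w"
    and mW: "\<And>x. m *v x \<in> W" and eps_small: "\<bar>\<epsilon>\<bar> < 1 / (opnorm1 m * opnorm1_on R W)"
  defines "c \<equiv> opnorm1 m * opnorm1_on R W"
  shows "0 < c" and "\<bar>\<epsilon>\<bar> * c < 1" and "l1norm (L (m *v x)) \<le> c * l1norm x"
proof -
  show "0 < c"
    using eps_small unfolding c_def
    by (metis abs_ge_zero divide_le_0_1_iff not_le order_le_less_trans)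
  then show "\<bar>\<epsilon>\<bar> * c < 1"
    using eps_small by (simp add: c_def less_divide_eq)
  have "0 < opnorm1_on R W"
    using \<open>0 < c\<close> opnorm1_nonneg[of m] by (auto simp: c_def zero_less_mult_iff)
  have "l1norm (L (m *v x)) \<le> opnorm1_on R W * l1norm (m *v x)"
    using l1norm_le_opnorm1_on[OF assms(1,2) R_eq_L mW] R_eq_L[OF mW] by simp
  also have "\<dots> \<le> opnorm1_on R W * (opnorm1 m * l1norm x)"
    using l1norm_matrix_vector_le \<open>0 < opnorm1_on R W\<close> by simp
  finally show "l1norm (L (m *v x)) \<le> c * l1norm x" by (simp add: c_def algebra_simps)
qed

lemma perturbed_invariant_of_fixed_point:
  fixes M m :: "real ^ 'n ^ 'n"
  assumes right_inv: "\<And>w. w \<in> W \<Longrightarrow> L w - M *v L w = w" and mW: "\<And>x. m *v x \<in> W"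
    and "M *v u = u" and fixed: "v = u + \<epsilon> *\<^sub>R L (m *v v)"
  shows "(M + \<epsilon> *\<^sub>R m) *v v = v"
proof -
  have "v - M *v v = (u - M *v u) + \<epsilon> *\<^sub>R (L (m *v v) - M *v L (m *v v))"
    by (subst (1 2) fixed) (simp add: matrix_vector_right_distrib scaleR_matrix_vector_assoc algebra_simps)
  also have "\<dots> = \<epsilon> *\<^sub>R (m *v v)"
    using \<open>M *v u = u\<close> right_inv[OF mW] by simp
  finally show ?thesis
    using perturbed_fixed_point_iff by blast
qed

lemma perturbed_invariant_unique:
  fixes M m :: "real ^ 'n ^ 'n"
  assumes "linear L" and left_inv: "\<And>w. w \<in> W \<Longrightarrow> L (w - M *v w) = w"
    and W: "W = {v. mass v = 0}"
    and bound: "\<And>x. l1norm (L (m *v x)) \<le> c * l1norm x" and contraction: "\<bar>\<epsilon>\<bar> * c < 1"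
    and p: "(M + \<epsilon> *\<^sub>R m) *v p = p" and v: "(M + \<epsilon> *\<^sub>R m) *v v = v"
    and "mass p = mass v"
  shows "p = v"
proof -
  have "p - v \<in> W"
    using \<open>mass p = mass v\<close> by (simp add: W linear_diff[OF linear_mass])
  then have "p - v = L ((p - v) - M *v (p - v))"
    using left_inv by simp
  also have "\<dots> = \<epsilon> *\<^sub>R L (m *v (p - v))"
    using p v perturbed_fixed_point_iff[of M \<epsilon> m "p - v"]
    by (simp add: matrix_vector_mult_diff_distrib linear_scale[OF \<open>linear L\<close>])
  finally have "p - v = 0"
    by (rule eq_zero_if_contracted[OF bound contraction])
  then show ?thesis by simp
qed

lemma neumann_series_tendsto_perturbed_invariant:
  fixes M m :: "real ^ 'n ^ 'n"
  assumes "linear L" and W: "W = {v. mass v = 0}"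
    and L_into: "\<And>w. w \<in> W \<Longrightarrow> L w \<in> W"
    and L_right: "\<And>w. w \<in> W \<Longrightarrow> L w - M *v L w = w"
    and L_left: "\<And>w. w \<in> W \<Longrightarrow> L (w - M *v w) = w"
    and mW: "\<And>x. m *v x \<in> W" and "M *v u = u" and "mass u = 1"
    and "0 \<le> c" and bound: "\<And>x. l1norm (L (m *v x)) \<le> c * l1norm x" and contraction: "\<bar>\<epsilon>\<bar> * c < 1"
    and "prob_vector p" and p: "(M + \<epsilon> *\<^sub>R m) *v p = p"
  shows "(\<lambda>K. l1norm (u + (\<Sum>n\<in>{1..K}. \<epsilon> ^ n *\<^sub>R ((\<lambda>x. L (m *v x)) ^^ n) u) - p)) \<longlonglongrightarrow> 0"
proof -
  define T where "T x = L (m *v x)" for x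
  have "linear T"
    unfolding T_def using linear_compose[OF matrix_vector_mul_linear \<open>linear L\<close>] by (simp add: o_def)
  then obtain v where converges: "(\<lambda>K. l1norm (u + (\<Sum>n\<in>{1..K}. \<epsilon> ^ n *\<^sub>R (T ^^ n) u) - v)) \<longlonglongrightarrow> 0"
    and fixed: "v = u + \<epsilon> *\<^sub>R T v"
    using l1_neumann_series[OF _ \<open>0 \<le> c\<close> bound[folded T_def] contraction] by blast
  have invariant: "(M + \<epsilon> *\<^sub>R m) *v v = v"
    using perturbed_invariant_of_fixed_point[OF L_right mW \<open>M *v u = u\<close>] fixed by (simp add: T_def)
  have "mass v = 1"
    using \<open>mass u = 1\<close> L_into[OF mW] W
    by (subst fixed) (simp add: T_def linear_add[OF linear_mass] linear_scale[OF linear_mass])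
  then have "p = v"
    using perturbed_invariant_unique[OF \<open>linear L\<close> L_left W bound contraction p invariant]
      \<open>prob_vector p\<close> by (simp add: prob_vector_def mass_def)
  moreover have "T = (\<lambda>x. L (m *v x))"
    by (simp add: T_def fun_eq_iff)
  ultimately show ?thesis
    using converges by simp
qed

theorem mainTheorem2:
  fixes M m :: "real ^ 'n ^ 'n"
    and u :: "'n \<Rightarrow> real ^ 'n" and lam :: "'n \<Rightarrow> real" and j1 :: 'n
    and W :: "(real ^ 'n) set" and \<epsilon> :: real
  assumes stoch: "column_stochastic M"
    and erg: "ergodic M"
    and indep: "independent (range u)" and inj: "inj u"
    and spans: "span (range u) = UNIV"
    and eig: "\<And>k. M *v u k = lam k *\<^sub>R u k"
    and lam1: "lam j1 = 1"
    and lamk: "\<And>k. k \<noteq> j1 \<Longrightarrow> \<bar>lam k\<bar> < 1"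
    and u1: "prob_vector (u j1)"
    and W_def: "W = span (u ` (UNIV - {j1}))"
    and m_nz: "m \<noteq> 0"
    and m_cols: "\<And>j. (\<Sum>i\<in>UNIV. m $ i $ j) = 0"
    and eps_small: "\<bar>\<epsilon>\<bar> < 1 / (opnorm1 m * opnorm1_on (resolvent_on M W) W)"
    and eps_range: "eps_minus M m \<le> \<epsilon>" "\<epsilon> \<le> eps_plus M m"
    and uniq: "\<exists>!p. prob_vector p \<and> (M + \<epsilon> *\<^sub>R m) *v p = p"
  shows "\<exists>v1. (\<lambda>K. l1norm (u j1 + (\<Sum>n\<in>{1..K}. \<epsilon> ^ n *\<^sub>R
                  (((\<lambda>x. resolvent_on M W (m *v x)) ^^ n) (u j1))) - v1)) \<longlonglongrightarrow> 0
            \<and> (M + \<epsilon> *\<^sub>R m) *v v1 = v1 \<and> prob_vector v1"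
proof -
  have lam_ne_1: "lam k \<noteq> 1" if "k \<noteq> j1" for k
    using lamk[OF that] by auto
  have mass_u1: "mass (u j1) = 1"
    using u1 by (simp add: prob_vector_def mass_def)
  have W_kernel: "W = {v. mass v = 0}"
    using eigenspan_eq_mass_kernel[OF stoch spans eig lam_ne_1] mass_u1 by (simp add: W_def)
  have mW: "m *v x \<in> W" for x
    using m_cols by (simp add: W_kernel mass_matrix_vector_mult)
  obtain L where "linear L" and L_into: "\<And>w. w \<in> W \<Longrightarrow> L w \<in> W"
    and L_right: "\<And>w. w \<in> W \<Longrightarrow> L w - M *v L w = w"
    and L_left: "\<And>w. w \<in> W \<Longrightarrow> L (w - M *v w) = w"
    using eigenbasis_inverse_one_minus[OF indep inj eig lam_ne_1] unfolding W_def by blast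
  have R_eq_L: "resolvent_on M W w = L w" if "w \<in> W" for w
    using resolvent_on_eqI[OF L_into L_right L_left that] .
  have "subspace W"
    by (simp add: W_def subspace_span)
  note contraction = resolvent_mult_contraction[OF \<open>linear L\<close> this R_eq_L mW eps_small]
  obtain p where p: "prob_vector p" "(M + \<epsilon> *\<^sub>R m) *v p = p"
    using uniq by blast
  have "(\<lambda>x. resolvent_on M W (m *v x)) = (\<lambda>x. L (m *v x))"
    using R_eq_L mW by auto
  then show ?thesis
    using neumann_series_tendsto_perturbed_invariant[OF \<open>linear L\<close> W_kernel L_into L_right L_left mW
        _ mass_u1 less_imp_le[OF contraction(1)] contraction(3,2) p] eig[of j1] lam1 p
    by auto
qed

end
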